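(* Let $G,H,F,K$ be graphs such that there is a quantum homomorphism from $G$ to $F$ and a quantum homomorphism from $H$ to $K$. Then there are quantum homomorphisms (1) from $G\,\square\,H$ to $F\,\square\,K$; (2) from $G\times H$ to $F\times K$; (3) from $G\boxtimes H$ to $F\boxtimes K$; (4) from $G * H$ to $F * K$; (5) from $G[H]$ to $F[K]$.
   Context: Graphs are finite, simple and undirected; no vertex is adjacent to itself. All products below have vertex set $V(G)\times V(H)$. Cartesian product $G\,\square\,H$: $(u_1,v_1)\sim(u_2,v_2)$ iff ($u_1\sim u_2$ and $v_1=v_2$) or ($u_1=u_2$ and $v_1\sim v_2$). Categorical product $G\times H$: iff $u_1\sim u_2$ and $v_1\sim v_2$. Strong product $G\boxtimes H$: the edge union of $G\times H$ and $G\,\square\,H$. Disjunctive product $G*H$: iff $u_1\sim u_2$ or $v_1\sim v_2$. Lexicographic product $G[H]$: iff $u_1\sim u_2$, or ($u_1=u_2$ and $v_1\sim v_2$). For a graph $F$ and integer $d\ge1$, the measurement graph $M(F,d)$ has as vertices all tuples $(E_w)_{w\in V(F)}$ of orthogonal projectors in $\mathbb{C}^{d\times d}$ with $\sum_w E_w=I$; $(E_w)$ and $(E'_w)$ are adjacent iff $E_wE'_{w'}=0$ for all $w,w'$ with $w\not\sim w'$ (including $w=w'$). A quantum homomorphism from $G$ to $F$ is a graph homomorphism from $G$ to $M(F,d)$ for some $d$. *)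

theory Defs
  imports Complex_Main "Jordan_Normal_Form.Schur_Decomposition"
begin

type_synonym 'a graph = "'a set \<times> ('a \<Rightarrow> 'a \<Rightarrow> bool)"

definition verts :: "'a graph \<Rightarrow> 'a set" where "verts G = fst G"
definition adj :: "'a graph \<Rightarrow> 'a \<Rightarrow> 'a \<Rightarrow> bool" where "adj G = snd G"

definition graph :: "'a graph \<Rightarrow> bool" where
  "graph G \<longleftrightarrow> finite (verts G)
     \<and> (\<forall>x y. adj G x y \<longrightarrow> x \<in> verts G \<and> y \<in> verts G)
     \<and> (\<forall>x y. adj G x y \<longrightarrow> adj G y x)
     \<and> (\<forall>x. \<not> adj G x x)"

definition pair_adj :: "'a graph \<Rightarrow> 'b graph \<Rightarrow> ('a \<times> 'b \<Rightarrow> 'a \<times> 'b \<Rightarrow> bool) \<Rightarrow> ('a \<times> 'b) graph" where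
  "pair_adj G H R = (verts G \<times> verts H,
     \<lambda>p q. p \<in> verts G \<times> verts H \<and> q \<in> verts G \<times> verts H \<and> R p q)"

definition cartesian_prod :: "'a graph \<Rightarrow> 'b graph \<Rightarrow> ('a \<times> 'b) graph" where
  "cartesian_prod G H = pair_adj G H (\<lambda>(u1,v1) (u2,v2).
     (adj G u1 u2 \<and> v1 = v2) \<or> (u1 = u2 \<and> adj H v1 v2))"

definition categorical_prod :: "'a graph \<Rightarrow> 'b graph \<Rightarrow> ('a \<times> 'b) graph" where
  "categorical_prod G H = pair_adj G H (\<lambda>(u1,v1) (u2,v2). adj G u1 u2 \<and> adj H v1 v2)"

definition strong_prod :: "'a graph \<Rightarrow> 'b graph \<Rightarrow> ('a \<times> 'b) graph" where
  "strong_prod G H = pair_adj G H (\<lambda>p q. adj (categorical_prod G H) p q \<or> adj (cartesian_prod G H) p q)"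

definition disjunctive_prod :: "'a graph \<Rightarrow> 'b graph \<Rightarrow> ('a \<times> 'b) graph" where
  "disjunctive_prod G H = pair_adj G H (\<lambda>(u1,v1) (u2,v2). adj G u1 u2 \<or> adj H v1 v2)"

definition lexico_prod :: "'a graph \<Rightarrow> 'b graph \<Rightarrow> ('a \<times> 'b) graph" where
  "lexico_prod G H = pair_adj G H (\<lambda>(u1,v1) (u2,v2). adj G u1 u2 \<or> (u1 = u2 \<and> adj H v1 v2))"

definition orth_proj :: "nat \<Rightarrow> complex mat \<Rightarrow> bool" where
  "orth_proj d P \<longleftrightarrow> P \<in> carrier_mat d d \<and> P * P = P \<and> mat_adjoint P = P"

definition mat_sum :: "nat \<Rightarrow> 'c set \<Rightarrow> ('c \<Rightarrow> complex mat) \<Rightarrow> complex mat" where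
  "mat_sum d S f = mat d d (\<lambda>(i,j). \<Sum>w\<in>S. f w $$ (i,j))"

definition measurement :: "'c graph \<Rightarrow> nat \<Rightarrow> ('c \<Rightarrow> complex mat) \<Rightarrow> bool" where
  "measurement F d E \<longleftrightarrow> (\<forall>w\<in>verts F. orth_proj d (E w)) \<and> mat_sum d (verts F) E = 1\<^sub>m d"

definition meas_adj :: "'c graph \<Rightarrow> nat \<Rightarrow> ('c \<Rightarrow> complex mat) \<Rightarrow> ('c \<Rightarrow> complex mat) \<Rightarrow> bool" where
  "meas_adj F d E E' \<longleftrightarrow> measurement F d E \<and> measurement F d E' \<and>
     (\<forall>w\<in>verts F. \<forall>w'\<in>verts F. \<not> adj F w w' \<longrightarrow> E w * E' w' = 0\<^sub>m d d)"

text \<open>Quantum homomorphism G -> F: a graph homomorphism G -> M(F,d) for some d >= 1.\<close>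
definition quantum_hom :: "'a graph \<Rightarrow> 'c graph \<Rightarrow> bool" where
  "quantum_hom G F \<longleftrightarrow> (\<exists>d\<ge>1. \<exists>\<rho> :: 'a \<Rightarrow> 'c \<Rightarrow> complex mat.
     (\<forall>g\<in>verts G. measurement F d (\<rho> g)) \<and>
     (\<forall>g g'. adj G g g' \<longrightarrow> meas_adj F d (\<rho> g) (\<rho> g')))"

end

(*
  The witness is the tensor product: (g, h) is sent to the measurement (f, k) \<mapsto> \<rho>1 g f \<otimes> \<rho>2 h k,
  which is again projective.  A product of two such tensors vanishes as soon as one of its
  coordinate products \<rho>1 g f \<rho>1 g' f' or \<rho>2 h k \<rho>2 h' k' does, and this happens when g ~ g' while
  f, f' are not adjacent, or when g = g' and f \<noteq> f' (distinct projectors of one measurement are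
  orthogonal).  For each of the five products, a non-edge (f, k), (f', k') facing an edge
  (g, h), (g', h') forces one of these two situations in some coordinate.
*)

theory Submission
  imports Defs
begin

lemma dim_mat_adjoint [simp]:
  "dim_row (mat_adjoint A) = dim_col A" "dim_col (mat_adjoint A) = dim_row A"
  by (simp_all add: mat_adjoint_def mat_of_rows_def)

lemma index_mat_adjoint [simp]:
  "i < dim_col A \<Longrightarrow> j < dim_row A \<Longrightarrow> mat_adjoint A $$ (i, j) = conjugate (A $$ (j, i))"
  by (simp add: mat_adjoint_def mat_of_rows_def)

lemma index_mult_mat_sum:
  "i < dim_row A \<Longrightarrow> j < dim_col B \<Longrightarrow> dim_col A = dim_row B \<Longrightarrow>
   (A * B) $$ (i, j) = (\<Sum>l<dim_col A. A $$ (i, l) * B $$ (l, j))"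
  by (simp add: scalar_prod_def lessThan_atLeast0)

lemma mat_adjoint_mult:
  fixes A B :: "'a :: conjugatable_field mat"
  assumes "dim_col A = dim_row B"
  shows "mat_adjoint (A * B) = mat_adjoint B * mat_adjoint A"
proof (rule eq_matI)
  fix i j assume ij: "i < dim_row (mat_adjoint B * mat_adjoint A)" "j < dim_col (mat_adjoint B * mat_adjoint A)"
  have "mat_adjoint (A * B) $$ (i, j) = (\<Sum>l<dim_col A. conjugate (A $$ (j, l) * B $$ (l, i)))"
    using assms ij by (simp add: index_mult_mat_sum sum_conjugate del: index_mult_mat(1))
  also have "\<dots> = (mat_adjoint B * mat_adjoint A) $$ (i, j)"
    using assms ij by (simp add: index_mult_mat_sum conjugate_dist_mul mult.commute del: index_mult_mat(1))
  finally show "mat_adjoint (A * B) $$ (i, j) = (mat_adjoint B * mat_adjoint A) $$ (i, j)" .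
qed simp_all

lemma index_mat_adjoint_mult_self_diag:
  fixes M :: "complex mat"
  assumes "b < dim_col M"
  shows "(mat_adjoint M * M) $$ (b, b) = of_real (\<Sum>a<dim_row M. (cmod (M $$ (a, b)))\<^sup>2)"
proof -
  have "(mat_adjoint M * M) $$ (b, b) = (\<Sum>a<dim_row M. M $$ (a, b) * cnj (M $$ (a, b)))"
    using assms by (simp add: index_mult_mat_sum mult.commute del: index_mult_mat(1))
  then show ?thesis
    by (simp only: complex_norm_square of_real_sum)
qed

definition kronecker_mat :: "'a :: times mat \<Rightarrow> 'a mat \<Rightarrow> 'a mat" where
  "kronecker_mat A B = mat (dim_row A * dim_row B) (dim_col A * dim_col B)
     (\<lambda>(i, j). A $$ (i div dim_row B, j div dim_col B) * B $$ (i mod dim_row B, j mod dim_col B))"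

lemma dim_kronecker_mat [simp]:
  "dim_row (kronecker_mat A B) = dim_row A * dim_row B"
  "dim_col (kronecker_mat A B) = dim_col A * dim_col B"
  by (simp_all add: kronecker_mat_def)

lemma index_kronecker_mat [simp]:
  "i < dim_row A * dim_row B \<Longrightarrow> j < dim_col A * dim_col B \<Longrightarrow>
   kronecker_mat A B $$ (i, j) = A $$ (i div dim_row B, j div dim_col B) * B $$ (i mod dim_row B, j mod dim_col B)"
  by (simp add: kronecker_mat_def)

lemma div_mod_less_mult:
  fixes i :: nat
  assumes "i < m * n"
  shows "i div n < m" "i mod n < n"
  using assms by (simp_all add: less_mult_imp_div_less mult.commute) (metis mod_less_divisor mult_0_right not_less0 neq0_conv)

lemma sum_lessThan_mult_div_mod:
  fixes m n :: nat
  shows "(\<Sum>k<m * n. g (k div n) (k mod n)) = (\<Sum>a<m. \<Sum>b<n. g a b)"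
proof -
  have "(\<Sum>k<m * n. g (k div n) (k mod n)) = (\<Sum>(a, b)\<in>{..<m} \<times> {..<n}. g a b)"
  proof (rule sum.reindex_bij_witness[where i = "\<lambda>(a, b). a * n + b" and j = "\<lambda>k. (k div n, k mod n)"])
    fix p assume "p \<in> {..<m} \<times> {..<n}"
    then obtain a b where p: "p = (a, b)" "a < m" "b < n" by auto
    then have "a * n + b < (a + 1) * n" by simp
    also have "\<dots> \<le> m * n" using p by (intro mult_right_mono) auto
    finally show "(\<lambda>(a, b). a * n + b) p \<in> {..<m * n}" using p by simp
  qed (auto simp: div_mod_less_mult)
  also have "\<dots> = (\<Sum>a<m. \<Sum>b<n. g a b)"
    by (simp add: sum.cartesian_product)
  finally show ?thesis .
qed

lemma kronecker_mat_mult: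
  fixes A B C D :: "'a :: comm_semiring_0 mat"
  assumes "dim_col A = dim_row C" "dim_col B = dim_row D"
  shows "kronecker_mat A B * kronecker_mat C D = kronecker_mat (A * C) (B * D)"
proof (rule eq_matI)
  fix i j assume "i < dim_row (kronecker_mat (A * C) (B * D))" "j < dim_col (kronecker_mat (A * C) (B * D))"
  then have i: "i < dim_row A * dim_row B" and j: "j < dim_col C * dim_col D" by simp_all
  let ?m = "dim_col A" and ?n = "dim_col B"
  have "(kronecker_mat A B * kronecker_mat C D) $$ (i, j)
      = (\<Sum>k<?m * ?n. (A $$ (i div dim_row B, k div ?n) * C $$ (k div ?n, j div dim_col D))
                     * (B $$ (i mod dim_row B, k mod ?n) * D $$ (k mod ?n, j mod dim_col D)))"
    using assms i j div_mod_less_mult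
    by (auto simp: index_mult_mat_sum mult_ac simp del: index_mult_mat(1) intro!: sum.cong)
  also have "\<dots> = (\<Sum>a<?m. \<Sum>b<?n. (A $$ (i div dim_row B, a) * C $$ (a, j div dim_col D))
                     * (B $$ (i mod dim_row B, b) * D $$ (b, j mod dim_col D)))"
    by (rule sum_lessThan_mult_div_mod)
  also have "\<dots> = (\<Sum>a<?m. A $$ (i div dim_row B, a) * C $$ (a, j div dim_col D))
                 * (\<Sum>b<?n. B $$ (i mod dim_row B, b) * D $$ (b, j mod dim_col D))"
    by (simp add: sum_product)
  also have "\<dots> = kronecker_mat (A * C) (B * D) $$ (i, j)"
    using assms i j div_mod_less_mult by (simp add: index_mult_mat_sum del: index_mult_mat(1))
  finally show "(kronecker_mat A B * kronecker_mat C D) $$ (i, j) = kronecker_mat (A * C) (B * D) $$ (i, j)" .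
qed simp_all

lemma mat_adjoint_kronecker_mat:
  fixes A B :: "'a :: conjugatable_field mat"
  shows "mat_adjoint (kronecker_mat A B) = kronecker_mat (mat_adjoint A) (mat_adjoint B)"
  by (rule eq_matI) (auto simp: div_mod_less_mult conjugate_dist_mul)

lemma kronecker_mat_zero_left [simp]:
  "kronecker_mat (0\<^sub>m n m :: 'a :: mult_zero mat) B = 0\<^sub>m (n * dim_row B) (m * dim_col B)"
  by (rule eq_matI) (auto simp: div_mod_less_mult)

lemma kronecker_mat_zero_right [simp]:
  "kronecker_mat A (0\<^sub>m n m :: 'a :: mult_zero mat) = 0\<^sub>m (dim_row A * n) (dim_col A * m)"
  by (rule eq_matI) (auto simp: div_mod_less_mult)

lemma kronecker_mat_one [simp]:
  "kronecker_mat (1\<^sub>m n :: 'a :: semiring_1 mat) (1\<^sub>m m) = 1\<^sub>m (n * m)"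
proof (rule eq_matI)
  fix i j assume "i < dim_row (1\<^sub>m (n * m) :: 'a mat)" "j < dim_col (1\<^sub>m (n * m) :: 'a mat)"
  then have ij: "i < n * m" "j < n * m" by simp_all
  have "i = j \<longleftrightarrow> i div m = j div m \<and> i mod m = j mod m"
    by (metis div_mult_mod_eq)
  then show "kronecker_mat (1\<^sub>m n) (1\<^sub>m m) $$ (i, j) = (1\<^sub>m (n * m) :: 'a mat) $$ (i, j)"
    using ij div_mod_less_mult by simp
qed simp_all

lemma dim_mat_sum [simp]: "dim_row (mat_sum d S f) = d" "dim_col (mat_sum d S f) = d"
  by (simp_all add: mat_sum_def)

lemma index_mat_sum [simp]:
  "i < d \<Longrightarrow> j < d \<Longrightarrow> mat_sum d S f $$ (i, j) = (\<Sum>v\<in>S. f v $$ (i, j))"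
  by (simp add: mat_sum_def)

lemma mat_sum_cong: "(\<And>v. v \<in> S \<Longrightarrow> f v = g v) \<Longrightarrow> mat_sum d S f = mat_sum d S g"
  unfolding mat_sum_def by (metis (no_types, lifting) sum.cong)

lemma mult_mat_sum_left:
  assumes "A \<in> carrier_mat d d" and "\<And>v. v \<in> S \<Longrightarrow> f v \<in> carrier_mat d d"
  shows "A * mat_sum d S f = mat_sum d S (\<lambda>v. A * f v)"
proof (rule eq_matI)
  fix i j assume "i < dim_row (mat_sum d S (\<lambda>v. A * f v))" "j < dim_col (mat_sum d S (\<lambda>v. A * f v))"
  then show "(A * mat_sum d S f) $$ (i, j) = mat_sum d S (\<lambda>v. A * f v) $$ (i, j)"
    using assms by (auto simp: index_mult_mat_sum sum_distrib_left sum.swap[of _ S]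
        simp del: index_mult_mat(1) intro!: sum.cong dest!: assms(2))
qed (use assms in simp_all)

lemma mult_mat_sum_right:
  assumes "A \<in> carrier_mat d d" and "\<And>v. v \<in> S \<Longrightarrow> f v \<in> carrier_mat d d"
  shows "mat_sum d S f * A = mat_sum d S (\<lambda>v. f v * A)"
proof (rule eq_matI)
  fix i j assume "i < dim_row (mat_sum d S (\<lambda>v. f v * A))" "j < dim_col (mat_sum d S (\<lambda>v. f v * A))"
  then show "(mat_sum d S f * A) $$ (i, j) = mat_sum d S (\<lambda>v. f v * A) $$ (i, j)"
    using assms by (auto simp: index_mult_mat_sum sum_distrib_right sum.swap[of _ S]
        simp del: index_mult_mat(1) intro!: sum.cong dest!: assms(2))
qed (use assms in simp_all)

lemma mat_sum_remove:
  assumes "finite S" "w \<in> S" "f w \<in> carrier_mat d d"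
  shows "mat_sum d S f = f w + mat_sum d (S - {w}) f"
  using assms by (intro eq_matI) (simp_all add: sum.remove)

lemma mat_sum_gram_eq_0:
  fixes M :: "'c \<Rightarrow> complex mat"
  assumes "finite S" and M: "\<And>j. j \<in> S \<Longrightarrow> M j \<in> carrier_mat n d"
    and zero: "mat_sum d S (\<lambda>j. mat_adjoint (M j) * M j) = 0\<^sub>m d d"
    and "j \<in> S"
  shows "M j = 0\<^sub>m n d"
proof (rule eq_matI)
  fix a b assume ab: "a < dim_row (0\<^sub>m n d :: complex mat)" "b < dim_col (0\<^sub>m n d :: complex mat)"
  define r where "r k = (\<Sum>a<n. (cmod (M k $$ (a, b)))\<^sup>2)" for k
  have diag: "(mat_adjoint (M k) * M k) $$ (b, b) = complex_of_real (r k)" if "k \<in> S" for k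
    using M[OF that] ab unfolding r_def by (subst index_mat_adjoint_mult_self_diag) auto
  have "complex_of_real (\<Sum>k\<in>S. r k) = mat_sum d S (\<lambda>j. mat_adjoint (M j) * M j) $$ (b, b)"
    using ab by (simp add: diag del: index_mult_mat(1))
  then have "(\<Sum>k\<in>S. r k) = 0"
    using ab zero by (simp del: of_real_sum)
  moreover have "r k \<ge> 0" for k
    by (simp add: r_def sum_nonneg)
  ultimately have "r j = 0"
    using \<open>finite S\<close> \<open>j \<in> S\<close> by (simp add: sum_nonneg_eq_0_iff)
  then show "M j $$ (a, b) = 0\<^sub>m n d $$ (a, b)"
    using ab by (simp add: r_def sum_nonneg_eq_0_iff)
qed (use M \<open>j \<in> S\<close> in auto)

lemma mat_sum_kronecker_mat:
  assumes "\<And>v. v \<in> V \<Longrightarrow> E v \<in> carrier_mat d1 d1" "\<And>w. w \<in> W \<Longrightarrow> E' w \<in> carrier_mat d2 d2"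
  shows "mat_sum (d1 * d2) (V \<times> W) (\<lambda>(v, w). kronecker_mat (E v) (E' w))
       = kronecker_mat (mat_sum d1 V E) (mat_sum d2 W E')"
proof (rule eq_matI)
  fix i j assume "i < dim_row (kronecker_mat (mat_sum d1 V E) (mat_sum d2 W E'))"
    "j < dim_col (kronecker_mat (mat_sum d1 V E) (mat_sum d2 W E'))"
  then have "i < d1 * d2" "j < d1 * d2" by simp_all
  then show "mat_sum (d1 * d2) (V \<times> W) (\<lambda>(v, w). kronecker_mat (E v) (E' w)) $$ (i, j)
       = kronecker_mat (mat_sum d1 V E) (mat_sum d2 W E') $$ (i, j)"
    using assms div_mod_less_mult
    by (auto simp: sum_product sum.cartesian_product intro!: sum.cong dest!: assms)
qed simp_all

lemma orth_proj_sandwich: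
  assumes "orth_proj d P" "orth_proj d Q"
  shows "P * Q * P = mat_adjoint (Q * P) * (Q * P)"
proof -
  have P: "P \<in> carrier_mat d d" and Q: "Q \<in> carrier_mat d d"
    using assms by (auto simp: orth_proj_def)
  have "mat_adjoint (Q * P) * (Q * P) = P * Q * (Q * P)"
    using assms P Q by (simp add: mat_adjoint_mult orth_proj_def)
  also have "\<dots> = P * (Q * Q) * P"
    using P Q by (simp add: assoc_mult_mat[of _ d d _ d _ d])
  also have "\<dots> = P * Q * P"
    using assms by (simp add: orth_proj_def)
  finally show ?thesis ..
qed

lemma orth_proj_kronecker_mat:
  "orth_proj d1 A \<Longrightarrow> orth_proj d2 B \<Longrightarrow> orth_proj (d1 * d2) (kronecker_mat A B)"
  by (auto simp: orth_proj_def kronecker_mat_mult mat_adjoint_kronecker_mat)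

lemma measurement_carrier_mat:
  "measurement F d E \<Longrightarrow> w \<in> verts F \<Longrightarrow> E w \<in> carrier_mat d d"
  by (simp add: measurement_def orth_proj_def)

lemma measurement_orthogonal:
  assumes E: "measurement F d E" and fin: "finite (verts F)"
    and w: "w \<in> verts F" and w': "w' \<in> verts F" and "w \<noteq> w'"
  shows "E w' * E w = 0\<^sub>m d d"
proof -
  let ?V = "verts F" and ?P = "E w"
  have proj: "orth_proj d (E v)" if "v \<in> ?V" for v
    using E that by (simp add: measurement_def)
  have carrier: "E v \<in> carrier_mat d d" if "v \<in> ?V" for v
    using E that by (rule measurement_carrier_mat)
  have idem: "?P * ?P = ?P"
    using proj[OF w] by (simp add: orth_proj_def)
  have carrier_PEv: "?P * E v \<in> carrier_mat d d" if "v \<in> ?V" for v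
    using carrier[OF w] carrier[OF that] by (rule mult_carrier_mat)
  \<comment> \<open>\<open>E w = \<Sum>v E w E v E w\<close>, and for \<open>v \<noteq> w\<close> the summands are Gram matrices of \<open>E v E w\<close>\<close>
  have "?P = ?P * mat_sum d ?V E * ?P"
    using E carrier[OF w] idem by (simp add: measurement_def)
  also have "\<dots> = mat_sum d ?V (\<lambda>v. ?P * E v) * ?P"
    by (simp only: mult_mat_sum_left[OF carrier[OF w] carrier])
  also have "\<dots> = mat_sum d ?V (\<lambda>v. ?P * E v * ?P)"
    by (rule mult_mat_sum_right[OF carrier[OF w] carrier_PEv])
  also have "\<dots> = ?P * ?P * ?P + mat_sum d (?V - {w}) (\<lambda>v. ?P * E v * ?P)"
    using carrier[OF w] idem by (intro mat_sum_remove[OF fin w]) simp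
  also have "\<dots> = ?P + mat_sum d (?V - {w}) (\<lambda>v. mat_adjoint (E v * ?P) * (E v * ?P))"
    unfolding idem by (rule arg_cong[where f = "(+) ?P"], rule mat_sum_cong, rule orth_proj_sandwich)
      (use proj w in auto)
  finally have sum_eq: "?P = ?P + mat_sum d (?V - {w}) (\<lambda>v. mat_adjoint (E v * ?P) * (E v * ?P))"
    (is "_ = _ + ?S") .
  have "?S = 0\<^sub>m d d"
  proof (rule eq_matI)
    fix i j assume "i < dim_row (0\<^sub>m d d :: complex mat)" "j < dim_col (0\<^sub>m d d :: complex mat)"
    moreover have "?P $$ (i, j) = (?P + ?S) $$ (i, j)"
      using sum_eq by (rule arg_cong)
    ultimately show "?S $$ (i, j) = 0\<^sub>m d d $$ (i, j)"
      by simp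
  qed simp_all
  from mat_sum_gram_eq_0[where M = "\<lambda>v. E v * ?P", OF _ _ this] show ?thesis
    using fin w w' \<open>w \<noteq> w'\<close> carrier by (auto intro: mult_carrier_mat)
qed

lemma measurement_kronecker_mat:
  assumes "measurement F d1 E" "measurement K d2 E'" "verts Q = verts F \<times> verts K"
  shows "measurement Q (d1 * d2) (\<lambda>(f, k). kronecker_mat (E f) (E' k))"
  using assms
  by (auto simp: measurement_def mat_sum_kronecker_mat measurement_carrier_mat orth_proj_kronecker_mat)

definition qhom_rep :: "'a graph \<Rightarrow> 'c graph \<Rightarrow> nat \<Rightarrow> ('a \<Rightarrow> 'c \<Rightarrow> complex mat) \<Rightarrow> bool" where
  "qhom_rep G F d \<rho> \<longleftrightarrow> (\<forall>g\<in>verts G. measurement F d (\<rho> g))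
     \<and> (\<forall>g g'. adj G g g' \<longrightarrow> meas_adj F d (\<rho> g) (\<rho> g'))"

lemma quantum_hom_iff_qhom_rep: "quantum_hom G F \<longleftrightarrow> (\<exists>d\<ge>1. \<exists>\<rho>. qhom_rep G F d \<rho>)"
  by (simp add: quantum_hom_def qhom_rep_def)

definition forces_orthogonal :: "'a graph \<Rightarrow> 'c graph \<Rightarrow> 'a \<Rightarrow> 'a \<Rightarrow> 'c \<Rightarrow> 'c \<Rightarrow> bool" where
  "forces_orthogonal G F g g' f f' \<longleftrightarrow> (adj G g g' \<and> \<not> adj F f f') \<or> (g = g' \<and> f \<noteq> f')"

lemma qhom_rep_orthogonal:
  assumes \<rho>: "qhom_rep G F d \<rho>" and "finite (verts F)"
    and "g \<in> verts G" "f \<in> verts F" "f' \<in> verts F" and "forces_orthogonal G F g g' f f'"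
  shows "\<rho> g f * \<rho> g' f' = 0\<^sub>m d d"
  using assms(6)
proof (unfold forces_orthogonal_def, elim disjE conjE)
  assume "adj G g g'" "\<not> adj F f f'"
  then show ?thesis
    using \<rho> assms(4,5) by (auto simp: qhom_rep_def meas_adj_def)
next
  assume "g = g'" "f \<noteq> f'"
  then show ?thesis
    using \<rho> assms(2-5) by (auto simp: qhom_rep_def intro: measurement_orthogonal)
qed

lemma verts_pair_adj [simp]: "verts (pair_adj G H R) = verts G \<times> verts H"
  by (simp add: pair_adj_def verts_def)

lemma adj_pair_adj [simp]:
  "adj (pair_adj G H R) p q \<longleftrightarrow> p \<in> verts G \<times> verts H \<and> q \<in> verts G \<times> verts H \<and> R p q"
  by (simp add: pair_adj_def adj_def verts_def)

lemma qhom_rep_pair_adj: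
  assumes \<rho>1: "qhom_rep G F d1 \<rho>1" and \<rho>2: "qhom_rep H K d2 \<rho>2"
    and "finite (verts F)" "finite (verts K)"
    and compatible: "\<And>g g' h h' f f' k k'. g \<in> verts G \<Longrightarrow> g' \<in> verts G \<Longrightarrow> h \<in> verts H \<Longrightarrow> h' \<in> verts H \<Longrightarrow>
      f \<in> verts F \<Longrightarrow> f' \<in> verts F \<Longrightarrow> k \<in> verts K \<Longrightarrow> k' \<in> verts K \<Longrightarrow>
      R (g, h) (g', h') \<Longrightarrow> \<not> S (f, k) (f', k') \<Longrightarrow>
      forces_orthogonal G F g g' f f' \<or> forces_orthogonal H K h h' k k'"
  shows "qhom_rep (pair_adj G H R) (pair_adj F K S) (d1 * d2)
           (\<lambda>(g, h) (f, k). kronecker_mat (\<rho>1 g f) (\<rho>2 h k))"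
proof -
  let ?\<rho> = "\<lambda>(g, h) (f, k). kronecker_mat (\<rho>1 g f) (\<rho>2 h k)"
  have meas: "measurement (pair_adj F K S) (d1 * d2) (?\<rho> (g, h))" if "g \<in> verts G" "h \<in> verts H" for g h
    using \<rho>1 \<rho>2 that by (auto simp: qhom_rep_def intro: measurement_kronecker_mat)
  have orth: "?\<rho> (g, h) (f, k) * ?\<rho> (g', h') (f', k') = 0\<^sub>m (d1 * d2) (d1 * d2)"
    if "g \<in> verts G" "g' \<in> verts G" "h \<in> verts H" "h' \<in> verts H" "f \<in> verts F" "f' \<in> verts F"
      "k \<in> verts K" "k' \<in> verts K" "R (g, h) (g', h')" "\<not> S (f, k) (f', k')"
    for g g' h h' f f' k k'
  proof -
    have carrier1: "\<rho>1 x y \<in> carrier_mat d1 d1" if "x \<in> verts G" "y \<in> verts F" for x y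
      using \<rho>1 that by (auto simp: qhom_rep_def intro: measurement_carrier_mat)
    have carrier2: "\<rho>2 x y \<in> carrier_mat d2 d2" if "x \<in> verts H" "y \<in> verts K" for x y
      using \<rho>2 that by (auto simp: qhom_rep_def intro: measurement_carrier_mat)
    have "?\<rho> (g, h) (f, k) * ?\<rho> (g', h') (f', k') = kronecker_mat (\<rho>1 g f * \<rho>1 g' f') (\<rho>2 h k * \<rho>2 h' k')"
      using carrier1[OF that(1,5)] carrier1[OF that(2,6)] carrier2[OF that(3,7)] carrier2[OF that(4,8)]
      by (simp add: kronecker_mat_mult)
    also have "\<dots> = 0\<^sub>m (d1 * d2) (d1 * d2)"
      using compatible[OF that] carrier1[OF that(1,5)] carrier1[OF that(2,6)] carrier2[OF that(3,7)] carrier2[OF that(4,8)]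
        qhom_rep_orthogonal[OF \<rho>1 assms(3) that(1,5,6)] qhom_rep_orthogonal[OF \<rho>2 assms(4) that(3,7,8)]
      by auto
    finally show ?thesis .
  qed
  show ?thesis
    unfolding qhom_rep_def
  proof (intro conjI ballI allI impI)
    fix p assume "p \<in> verts (pair_adj G H R)"
    then show "measurement (pair_adj F K S) (d1 * d2) (?\<rho> p)"
      using meas by auto
  next
    fix p q assume "adj (pair_adj G H R) p q"
    then obtain g h g' h' where pqgh: "p = (g, h)" "q = (g', h')" "g \<in> verts G" "h \<in> verts H"
      "g' \<in> verts G" "h' \<in> verts H" "R (g, h) (g', h')"
      by auto
    have "measurement (pair_adj F K S) (d1 * d2) (?\<rho> p)" "measurement (pair_adj F K S) (d1 * d2) (?\<rho> q)"
      using meas pqgh by simp_all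
    moreover have "\<forall>w\<in>verts (pair_adj F K S). \<forall>w'\<in>verts (pair_adj F K S).
        \<not> adj (pair_adj F K S) w w' \<longrightarrow> ?\<rho> p w * ?\<rho> q w' = 0\<^sub>m (d1 * d2) (d1 * d2)"
    proof (intro ballI impI)
      fix w w' assume "w \<in> verts (pair_adj F K S)" "w' \<in> verts (pair_adj F K S)"
        "\<not> adj (pair_adj F K S) w w'"
      then obtain f k f' k' where "w = (f, k)" "w' = (f', k')" "f \<in> verts F" "k \<in> verts K"
        "f' \<in> verts F" "k' \<in> verts K" "\<not> S (f, k) (f', k')"
        by auto
      with pqgh show "?\<rho> p w * ?\<rho> q w' = 0\<^sub>m (d1 * d2) (d1 * d2)"
        using orth[of g g' h h' f f' k k'] by simp
    qed
    ultimately show "meas_adj (pair_adj F K S) (d1 * d2) (?\<rho> p) (?\<rho> q)"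
      unfolding meas_adj_def by blast
  qed
qed

lemma quantum_hom_pair_adj:
  assumes "quantum_hom G F" "quantum_hom H K" "finite (verts F)" "finite (verts K)"
    and "\<And>g g' h h' f f' k k'. g \<in> verts G \<Longrightarrow> g' \<in> verts G \<Longrightarrow> h \<in> verts H \<Longrightarrow> h' \<in> verts H \<Longrightarrow>
      f \<in> verts F \<Longrightarrow> f' \<in> verts F \<Longrightarrow> k \<in> verts K \<Longrightarrow> k' \<in> verts K \<Longrightarrow>
      R (g, h) (g', h') \<Longrightarrow> \<not> S (f, k) (f', k') \<Longrightarrow>
      forces_orthogonal G F g g' f f' \<or> forces_orthogonal H K h h' k k'"
  shows "quantum_hom (pair_adj G H R) (pair_adj F K S)"
proof -
  obtain d1 \<rho>1 where "d1 \<ge> 1" and \<rho>1: "qhom_rep G F d1 \<rho>1"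
    using assms(1) by (auto simp: quantum_hom_iff_qhom_rep)
  obtain d2 \<rho>2 where "d2 \<ge> 1" and \<rho>2: "qhom_rep H K d2 \<rho>2"
    using assms(2) by (auto simp: quantum_hom_iff_qhom_rep)
  have "d1 * d2 \<ge> 1"
    using \<open>d1 \<ge> 1\<close> \<open>d2 \<ge> 1\<close> by simp
  moreover have "qhom_rep (pair_adj G H R) (pair_adj F K S) (d1 * d2)
      (\<lambda>(g, h) (f, k). kronecker_mat (\<rho>1 g f) (\<rho>2 h k))"
    by (rule qhom_rep_pair_adj[OF \<rho>1 \<rho>2 assms(3-5)])
  ultimately show ?thesis
    unfolding quantum_hom_iff_qhom_rep by blast
qed

theorem lemma7p1:
  fixes G :: "'a graph" and H :: "'b graph" and F :: "'c graph" and K :: "'d graph"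
  assumes "graph G" "graph H" "graph F" "graph K"
    and "quantum_hom G F" and "quantum_hom H K"
  shows "quantum_hom (cartesian_prod G H) (cartesian_prod F K)
    \<and> quantum_hom (categorical_prod G H) (categorical_prod F K)
    \<and> quantum_hom (strong_prod G H) (strong_prod F K)
    \<and> quantum_hom (disjunctive_prod G H) (disjunctive_prod F K)
    \<and> quantum_hom (lexico_prod G H) (lexico_prod F K)"
proof -
  have "finite (verts F)" "finite (verts K)"
    using assms(3,4) by (simp_all add: graph_def)
  note product = quantum_hom_pair_adj[OF assms(5,6) this]
  show ?thesis
  proof (intro conjI)
    show "quantum_hom (cartesian_prod G H) (cartesian_prod F K)"
      unfolding cartesian_prod_def by (rule product) (auto simp: forces_orthogonal_def)
    show "quantum_hom (categorical_prod G H) (categorical_prod F K)"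
      unfolding categorical_prod_def by (rule product) (auto simp: forces_orthogonal_def)
    show "quantum_hom (strong_prod G H) (strong_prod F K)"
      unfolding strong_prod_def categorical_prod_def cartesian_prod_def
      by (rule product) (auto simp: forces_orthogonal_def)
    show "quantum_hom (disjunctive_prod G H) (disjunctive_prod F K)"
      unfolding disjunctive_prod_def by (rule product) (auto simp: forces_orthogonal_def)
    show "quantum_hom (lexico_prod G H) (lexico_prod F K)"
      unfolding lexico_prod_def by (rule product) (auto simp: forces_orthogonal_def)
  qed
qed

end
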